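(* Fix $m\ge1$. For every $\delta>0$ there exists $\varepsilon>0$ such that for every binary MAC $W$ with $m$ users the following holds: if for every $S\subseteq E_m$ the value $I(X[S];Y,X[S^c])$ lies in $\mathbb{Z}+(-\varepsilon,\varepsilon)$, then for every $S\subseteq E_m$ the value $I(X[E_m]\cdot S;Y)$ lies in $[0,\delta)\cup(1-\delta,1]$, and which of these two intervals contains it is determined by the integers nearest to the values $I(X[T];Y,X[T^c])$, $T\subseteq E_m$.
   Context: A binary MAC with $m$ users is a channel $W$ with input alphabet $\mathbb{F}_2^m$ and finite output alphabet. $E_m=\{1,\dots,m\}$; $X[E_m]$ has i.i.d. uniform components on $\mathbb{F}_2$ and $Y$ is the output of $W$ on input $X[E_m]$. For $S\subseteq E_m$, $X[S]=(X[i])_{i\in S}$, $S^c=E_m\setminus S$, and $X[E_m]\cdot S=\bigoplus_{i\in S}X[i]$ (sum in $\mathbb{F}_2$). Mutual information is in bits. *)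

theory Defs
  imports Complex_Main
begin

text \<open>An input X[E_m] in F_2^m is represented
  as a function nat => bool which is False outside {1..m}.  The output alphabet of a
  MAC is an arbitrary finite set Out of natural numbers (every finite alphabet can be
  encoded this way), and W x y is the transition probability W(y|x).\<close>

definition users :: "nat \<Rightarrow> nat set" where
  "users m = {1..m}"

definition inputs :: "nat \<Rightarrow> (nat \<Rightarrow> bool) set" where
  "inputs m = {x. \<forall>i. x i \<longrightarrow> i \<in> users m}"

definition binary_mac :: "nat \<Rightarrow> nat set \<Rightarrow> ((nat \<Rightarrow> bool) \<Rightarrow> nat \<Rightarrow> real) \<Rightarrow> bool" where
  "binary_mac m Out W \<longleftrightarrow> finite Out \<and>
     (\<forall>x\<in>inputs m. (\<forall>y. 0 \<le> W x y) \<and> (\<forall>y. y \<notin> Out \<longrightarrow> W x y = 0)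
                    \<and> (\<Sum>y\<in>Out. W x y) = 1)"

text \<open>Sample space: pairs (x,y) with x uniform on F_2^m and y the channel output.\<close>

definition omega :: "nat \<Rightarrow> nat set \<Rightarrow> ((nat \<Rightarrow> bool) \<times> nat) set" where
  "omega m Out = inputs m \<times> Out"

definition prob_ev :: "nat \<Rightarrow> nat set \<Rightarrow> ((nat \<Rightarrow> bool) \<Rightarrow> nat \<Rightarrow> real)
    \<Rightarrow> ((nat \<Rightarrow> bool) \<times> nat \<Rightarrow> bool) \<Rightarrow> real" where
  "prob_ev m Out W E = (\<Sum>\<omega>\<in>omega m Out. if E \<omega> then W (fst \<omega>) (snd \<omega>) / 2 ^ m else 0)"

definition mutual_info :: "nat \<Rightarrow> nat set \<Rightarrow> ((nat \<Rightarrow> bool) \<Rightarrow> nat \<Rightarrow> real)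
    \<Rightarrow> ((nat \<Rightarrow> bool) \<times> nat \<Rightarrow> 'a) \<Rightarrow> ((nat \<Rightarrow> bool) \<times> nat \<Rightarrow> 'b) \<Rightarrow> real" where
  "mutual_info m Out W F G =
     (\<Sum>a\<in>F ` omega m Out. \<Sum>b\<in>G ` omega m Out.
        let pab = prob_ev m Out W (\<lambda>\<omega>. F \<omega> = a \<and> G \<omega> = b);
            pa = prob_ev m Out W (\<lambda>\<omega>. F \<omega> = a);
            pb = prob_ev m Out W (\<lambda>\<omega>. G \<omega> = b)
        in if pab = 0 then 0 else pab * log 2 (pab / (pa * pb)))"

definition Xsub :: "nat set \<Rightarrow> (nat \<Rightarrow> bool) \<times> nat \<Rightarrow> (nat \<Rightarrow> bool)" where
  "Xsub S \<omega> = (\<lambda>i. fst \<omega> i \<and> i \<in> S)"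

definition Yout :: "(nat \<Rightarrow> bool) \<times> nat \<Rightarrow> nat" where
  "Yout \<omega> = snd \<omega>"

definition YXcompl :: "nat \<Rightarrow> nat set \<Rightarrow> (nat \<Rightarrow> bool) \<times> nat \<Rightarrow> nat \<times> (nat \<Rightarrow> bool)" where
  "YXcompl m S \<omega> = (Yout \<omega>, Xsub (users m - S) \<omega>)"

definition Xdot :: "nat set \<Rightarrow> (nat \<Rightarrow> bool) \<times> nat \<Rightarrow> bool" where
  "Xdot S \<omega> = odd (card {i\<in>S. fst \<omega> i})"

end

theory Submission
  imports Defs
begin

text \<open>Write H(X[A] | Y) for the conditional entropy of the inputs in A given the output.
  Since the inputs are uniform, I(X[S]; Y, X[S^c]) = |S| + H(Y, X[S^c]) - H(Y, X[E_m]), so the hypothesis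
  puts every H(X[A] | Y) within 2\<epsilon> of an integer computable from the rounded informations.
  The key step concerns two bits U, V and a conditioning variable K: the Shannon inequalities
  together with H(U \<oplus> V | K) + H(U | K) + H(V | K) \<le> 2 H(U, V | K) show that if H(U | K),
  H(V | K) and H(U, V | K) are within d of integers, then H(U \<oplus> V | K) is within 4d of an
  integer determined by them. Replacing one input bit by its sum with another therefore keeps all
  the entropies H(X[A] | Y) near predicted integers, losing a factor 9 in the error. After |S| - 1
  such replacements one coordinate has become X[E_m]\<cdot>S, so H(X[E_m]\<cdot>S | Y) is close to 0 or 1,
  and I(X[E_m]\<cdot>S; Y) = 1 - H(X[E_m]\<cdot>S | Y) for S \<noteq> {}.\<close>

section \<open>Entropy on a finite probability space\<close>

locale finite_prob =
  fixes \<Omega> :: "'w set" and w :: "'w \<Rightarrow> real"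
  assumes finite_space: "finite \<Omega>"
    and weight_nonneg: "\<And>x. x \<in> \<Omega> \<Longrightarrow> 0 \<le> w x"
    and weight_sum: "sum w \<Omega> = 1"
begin

definition prob :: "('w \<Rightarrow> bool) \<Rightarrow> real" where
  "prob E = (\<Sum>x\<in>\<Omega>. if E x then w x else 0)"

definition entropy :: "('w \<Rightarrow> 'a) \<Rightarrow> real" where
  "entropy F = (\<Sum>x\<in>\<Omega>. w x * - log 2 (prob (\<lambda>y. F y = F x)))"

definition cond_entropy :: "('w \<Rightarrow> 'a) \<Rightarrow> ('w \<Rightarrow> 'b) \<Rightarrow> real" where
  "cond_entropy F K = entropy (\<lambda>x. (K x, F x)) - entropy K"

lemma prob_nonneg: "0 \<le> prob E"
  unfolding prob_def by (rule sum_nonneg) (auto intro: weight_nonneg)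

lemma prob_cong: "(\<And>x. x \<in> \<Omega> \<Longrightarrow> E x = E' x) \<Longrightarrow> prob E = prob E'"
  unfolding prob_def by (rule sum.cong) auto

lemma prob_mono: "(\<And>x. x \<in> \<Omega> \<Longrightarrow> E x \<Longrightarrow> E' x) \<Longrightarrow> prob E \<le> prob E'"
  unfolding prob_def by (rule sum_mono) (auto intro: weight_nonneg)

lemma prob_pos: assumes "x \<in> \<Omega>" "E x" "0 < w x" shows "0 < prob E"
proof -
  have "w x = (if E x then w x else 0)" using assms by simp
  also have "\<dots> \<le> prob E" unfolding prob_def
    by (rule member_le_sum[OF assms(1)]) (auto intro: weight_nonneg finite_space)
  finally show ?thesis using assms(3) by simp
qed

lemma prob_split: "prob E = prob (\<lambda>x. E x \<and> G x) + prob (\<lambda>x. E x \<and> \<not> G x)"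
  unfolding prob_def sum.distrib[symmetric] by (rule sum.cong) auto

lemma prob_True: "prob (\<lambda>x. True) = 1"
  unfolding prob_def using weight_sum by simp

lemma prob_eq_sum: "prob E = sum w {x\<in>\<Omega>. E x}"
  unfolding prob_def using finite_space by (simp add: sum.inter_filter)

lemma prob_eq_sum_image: "prob E = (\<Sum>a\<in>F ` \<Omega>. prob (\<lambda>x. F x = a \<and> E x))"
proof -
  have "prob E = (\<Sum>a\<in>F ` \<Omega>. \<Sum>x\<in>{x\<in>\<Omega>. F x = a}. if E x then w x else 0)"
    unfolding prob_def using sum.image_gen[OF finite_space] by blast
  also have "\<dots> = (\<Sum>a\<in>F ` \<Omega>. prob (\<lambda>x. F x = a \<and> E x))"
    unfolding prob_def
    by (rule sum.cong[OF refl]) (auto simp: sum.inter_filter[OF finite_space] intro!: sum.cong)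
  finally show ?thesis .
qed

lemma sum_prob_image: "(\<Sum>a\<in>F ` \<Omega>. prob (\<lambda>x. F x = a)) = 1"
  using prob_eq_sum_image[of "\<lambda>x. True" F] prob_True by simp

lemma sum_weight_comp: "(\<Sum>x\<in>\<Omega>. w x * \<phi> (F x)) = (\<Sum>a\<in>F ` \<Omega>. prob (\<lambda>x. F x = a) * \<phi> a)"
proof -
  have "(\<Sum>x\<in>\<Omega>. w x * \<phi> (F x)) = (\<Sum>a\<in>F ` \<Omega>. \<Sum>x\<in>{x\<in>\<Omega>. F x = a}. w x * \<phi> (F x))"
    using sum.image_gen[OF finite_space] by blast
  also have "\<dots> = (\<Sum>a\<in>F ` \<Omega>. \<Sum>x\<in>{x\<in>\<Omega>. F x = a}. w x * \<phi> a)"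
    by (rule sum.cong[OF refl], rule sum.cong) auto
  also have "\<dots> = (\<Sum>a\<in>F ` \<Omega>. prob (\<lambda>x. F x = a) * \<phi> a)"
    by (simp add: prob_eq_sum sum_distrib_right)
  finally show ?thesis .
qed

lemma sum_weight_cong:
  "(\<And>x. x \<in> \<Omega> \<Longrightarrow> 0 < w x \<Longrightarrow> f x = g x) \<Longrightarrow> (\<Sum>x\<in>\<Omega>. w x * f x) = (\<Sum>x\<in>\<Omega>. w x * g x)"
  by (rule sum.cong[OF refl]) (metis mult_eq_0_iff order_le_less weight_nonneg)

lemma sum_weight_mono:
  "(\<And>x. x \<in> \<Omega> \<Longrightarrow> 0 < w x \<Longrightarrow> f x \<le> g x) \<Longrightarrow> (\<Sum>x\<in>\<Omega>. w x * f x) \<le> (\<Sum>x\<in>\<Omega>. w x * g x)"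
  by (rule sum_mono) (metis mult_left_mono order_le_less weight_nonneg mult_zero_left)

lemma sum_weight_ratio_le:
  assumes "finite A" "F ` \<Omega> \<subseteq> A" "\<And>a. 0 \<le> \<psi> a"
  shows "(\<Sum>x\<in>\<Omega>. w x * (\<psi> (F x) / prob (\<lambda>y. F y = F x))) \<le> sum \<psi> A"
proof -
  have "(\<Sum>x\<in>\<Omega>. w x * (\<psi> (F x) / prob (\<lambda>y. F y = F x)))
      = (\<Sum>a\<in>F ` \<Omega>. prob (\<lambda>x. F x = a) * (\<psi> a / prob (\<lambda>y. F y = a)))"
    by (rule sum_weight_comp)
  also have "\<dots> \<le> (\<Sum>a\<in>F ` \<Omega>. \<psi> a)"
  proof (rule sum_mono)
    fix a show "prob (\<lambda>x. F x = a) * (\<psi> a / prob (\<lambda>y. F y = a)) \<le> \<psi> a"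
      using assms(3)[of a] by (cases "prob (\<lambda>y. F y = a) = 0") auto
  qed
  also have "\<dots> \<le> sum \<psi> A"
    by (rule sum_mono2) (use assms in auto)
  finally show ?thesis .
qed

lemma gibbs_inequality:
  assumes "\<And>x. x \<in> \<Omega> \<Longrightarrow> 0 < w x \<Longrightarrow> 0 < r x" and "(\<Sum>x\<in>\<Omega>. w x * r x) \<le> 1"
  shows "(\<Sum>x\<in>\<Omega>. w x * log 2 (r x)) \<le> 0"
proof -
  have "(\<Sum>x\<in>\<Omega>. w x * log 2 (r x)) \<le> (\<Sum>x\<in>\<Omega>. w x * ((r x - 1) / ln 2))"
  proof (rule sum_weight_mono)
    fix x assume "x \<in> \<Omega>" "0 < w x"
    then have "ln (r x) \<le> r x - 1" using assms(1) by (intro ln_le_minus_one)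
    then show "log 2 (r x) \<le> (r x - 1) / ln 2" unfolding log_def by (simp add: divide_right_mono)
  qed
  also have "\<dots> = ((\<Sum>x\<in>\<Omega>. w x * r x) - 1) / ln 2"
    by (simp add: right_diff_distrib sum_divide_distrib[symmetric] sum_subtractf weight_sum)
  also have "\<dots> \<le> 0" using assms(2) by (simp add: divide_nonpos_pos)
  finally show ?thesis .
qed

lemma entropy_cong:
  assumes "\<And>x y. x \<in> \<Omega> \<Longrightarrow> y \<in> \<Omega> \<Longrightarrow> F x = F y \<longleftrightarrow> G x = G y"
  shows "entropy F = entropy G"
  unfolding entropy_def
proof (rule sum.cong[OF refl])
  fix x assume "x \<in> \<Omega>"
  then have "prob (\<lambda>y. F y = F x) = prob (\<lambda>y. G y = G x)"
    by (intro prob_cong) (use assms in auto)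
  then show "w x * - log 2 (prob (\<lambda>y. F y = F x)) = w x * - log 2 (prob (\<lambda>y. G y = G x))"
    by simp
qed

lemma entropy_mono:
  assumes "\<And>x y. x \<in> \<Omega> \<Longrightarrow> y \<in> \<Omega> \<Longrightarrow> F x = F y \<Longrightarrow> G x = G y"
  shows "entropy G \<le> entropy F"
  unfolding entropy_def
proof (rule sum_weight_mono)
  fix x assume x: "x \<in> \<Omega>" "0 < w x"
  have "prob (\<lambda>y. F y = F x) \<le> prob (\<lambda>y. G y = G x)"
    using assms[OF _ x(1)] by (intro prob_mono) blast
  moreover have "0 < prob (\<lambda>y. F y = F x)" using prob_pos[OF x(1) _ x(2)] by simp
  ultimately show "- log 2 (prob (\<lambda>y. G y = G x)) \<le> - log 2 (prob (\<lambda>y. F y = F x))" by simp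
qed

lemma entropy_const: "entropy (\<lambda>x. c) = 0"
  unfolding entropy_def using prob_True by simp

lemma entropy_pair_le:
  fixes K :: "'w \<Rightarrow> 'k" and Z :: "'w \<Rightarrow> 'z::finite"
  shows "entropy (\<lambda>x. (K x, Z x)) \<le> entropy K + log 2 (card (UNIV :: 'z set))"
proof -
  define c where "c = real (card (UNIV :: 'z set))"
  define pk where "pk x = prob (\<lambda>y. K y = K x)" for x
  define pkz where "pkz x = prob (\<lambda>y. (K y, Z y) = (K x, Z x))" for x
  define r where "r x = pk x / (c * pkz x)" for x
  have "0 < c" unfolding c_def by (simp add: card_gt_0_iff)
  have "entropy (\<lambda>x. (K x, Z x)) - entropy K - log 2 c
      = (\<Sum>x\<in>\<Omega>. w x * (log 2 (pk x) - log 2 c - log 2 (pkz x)))"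
    unfolding entropy_def pk_def pkz_def
    by (simp add: right_diff_distrib sum_subtractf sum_negf weight_sum flip: sum_distrib_right)
  also have "\<dots> = (\<Sum>x\<in>\<Omega>. w x * log 2 (r x))"
  proof (rule sum_weight_cong)
    fix x assume x: "x \<in> \<Omega>" "0 < w x"
    have "0 < pk x" "0 < pkz x" unfolding pk_def pkz_def using prob_pos[OF x(1) _ x(2)] by simp_all
    with \<open>0 < c\<close> show "log 2 (pk x) - log 2 c - log 2 (pkz x) = log 2 (r x)"
      by (simp add: r_def log_divide log_mult)
  qed
  also have "\<dots> \<le> 0"
  proof (rule gibbs_inequality)
    show "0 < r x" if "x \<in> \<Omega>" "0 < w x" for x
      using \<open>0 < c\<close> prob_pos[OF that(1) _ that(2)] by (simp add: r_def pk_def pkz_def)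
    define \<psi> where "\<psi> t = prob (\<lambda>y. K y = fst t) / c" for t :: "'k \<times> 'z"
    have "(\<Sum>x\<in>\<Omega>. w x * r x)
        = (\<Sum>x\<in>\<Omega>. w x * (\<psi> (K x, Z x) / prob (\<lambda>y. (K y, Z y) = (K x, Z x))))"
      unfolding r_def pk_def pkz_def \<psi>_def by simp
    also have "\<dots> \<le> sum \<psi> (K ` \<Omega> \<times> UNIV)"
      by (rule sum_weight_ratio_le) (auto simp: finite_space prob_nonneg \<psi>_def c_def)
    also have "\<dots> = 1"
      using \<open>0 < c\<close> by (simp add: \<psi>_def c_def sum.cartesian_product' sum_prob_image)
    finally show "(\<Sum>x\<in>\<Omega>. w x * r x) \<le> 1" .
  qed
  finally show ?thesis unfolding c_def by simp
qed

lemma sum_prob_image_conj: "(\<Sum>a\<in>F ` \<Omega>. prob (\<lambda>x. E x \<and> F x = a)) = prob E"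
  by (subst (2) prob_eq_sum_image[of _ F]) (auto intro!: sum.cong prob_cong)

lemma entropy_submodular:
  fixes K :: "'w \<Rightarrow> 'k" and F :: "'w \<Rightarrow> 'f" and G :: "'w \<Rightarrow> 'g"
  shows "entropy (\<lambda>x. (K x, F x, G x)) + entropy K \<le> entropy (\<lambda>x. (K x, F x)) + entropy (\<lambda>x. (K x, G x))"
proof -
  define pk where "pk x = prob (\<lambda>y. K y = K x)" for x
  define pkf where "pkf x = prob (\<lambda>y. (K y, F y) = (K x, F x))" for x
  define pkg where "pkg x = prob (\<lambda>y. (K y, G y) = (K x, G x))" for x
  define p3 where "p3 x = prob (\<lambda>y. (K y, F y, G y) = (K x, F x, G x))" for x
  define r where "r x = pkf x * pkg x / (p3 x * pk x)" for x
  have "entropy (\<lambda>x. (K x, F x, G x)) + entropy K - entropy (\<lambda>x. (K x, F x)) - entropy (\<lambda>x. (K x, G x))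
      = (\<Sum>x\<in>\<Omega>. w x * (log 2 (pkf x) + log 2 (pkg x) - log 2 (p3 x) - log 2 (pk x)))"
    unfolding entropy_def pk_def pkf_def pkg_def p3_def
    by (simp add: distrib_left right_diff_distrib sum_subtractf sum.distrib sum_negf)
  also have "\<dots> = (\<Sum>x\<in>\<Omega>. w x * log 2 (r x))"
  proof (rule sum_weight_cong)
    fix x assume x: "x \<in> \<Omega>" "0 < w x"
    have "0 < pk x" "0 < pkf x" "0 < pkg x" "0 < p3 x"
      unfolding pk_def pkf_def pkg_def p3_def using prob_pos[OF x(1) _ x(2)] by simp_all
    then show "log 2 (pkf x) + log 2 (pkg x) - log 2 (p3 x) - log 2 (pk x) = log 2 (r x)"
      by (simp add: r_def log_divide log_mult)
  qed
  also have "\<dots> \<le> 0"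
  proof (rule gibbs_inequality)
    show "0 < r x" if "x \<in> \<Omega>" "0 < w x" for x
      using prob_pos[OF that(1) _ that(2)] by (simp add: r_def pk_def pkf_def pkg_def p3_def)
    define \<psi> where "\<psi> t = prob (\<lambda>y. K y = fst t \<and> F y = fst (snd t)) * prob (\<lambda>y. K y = fst t \<and> G y = snd (snd t))
        / prob (\<lambda>y. K y = fst t)" for t
    have "(\<Sum>x\<in>\<Omega>. w x * r x)
        = (\<Sum>x\<in>\<Omega>. w x * (\<psi> (K x, F x, G x) / prob (\<lambda>y. (K y, F y, G y) = (K x, F x, G x))))"
      unfolding r_def \<psi>_def pk_def pkf_def pkg_def p3_def by (simp add: field_simps)
    also have "\<dots> \<le> sum \<psi> (K ` \<Omega> \<times> F ` \<Omega> \<times> G ` \<Omega>)"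
      by (rule sum_weight_ratio_le) (auto simp: finite_space prob_nonneg \<psi>_def)
    also have "\<dots> = (\<Sum>k\<in>K ` \<Omega>. prob (\<lambda>y. K y = k) * prob (\<lambda>y. K y = k) / prob (\<lambda>y. K y = k))"
      by (simp add: \<psi>_def sum.cartesian_product' sum_divide_distrib[symmetric] sum_product[symmetric]
          sum_prob_image_conj)
    also have "\<dots> \<le> (\<Sum>k\<in>K ` \<Omega>. prob (\<lambda>y. K y = k))"
      by (rule sum_mono) (simp add: prob_nonneg)
    finally show "(\<Sum>x\<in>\<Omega>. w x * r x) \<le> 1" by (simp add: sum_prob_image)
  qed
  finally show ?thesis by simp
qed

lemma sum4_mult_square_le:
  fixes a b c d :: real
  assumes "0 \<le> a" "0 \<le> b" "0 \<le> c" "0 \<le> d"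
  shows "(a + b + c + d) * a\<^sup>2 \<le> (a + d) * (a + b) * (a + c)"
proof -
  have "(a + d) * (a + b) * (a + c) - (a + b + c + d) * a\<^sup>2 = a * (b * c + b * d + c * d) + b * c * d"
    by (simp add: algebra_simps power2_eq_square)
  also have "\<dots> \<ge> 0" using assms by simp
  finally show ?thesis by simp
qed

lemma prob_xor_inequality:
  fixes K :: "'w \<Rightarrow> 'k" and U V :: "'w \<Rightarrow> bool"
  shows "prob (\<lambda>y. K y = k) * (prob (\<lambda>y. K y = k \<and> U y = u \<and> V y = v))\<^sup>2
   \<le> prob (\<lambda>y. K y = k \<and> (U y \<noteq> V y) = (u \<noteq> v)) * prob (\<lambda>y. K y = k \<and> U y = u)
       * prob (\<lambda>y. K y = k \<and> V y = v)"
proof -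
  define q where "q u' v' = prob (\<lambda>y. K y = k \<and> U y = u' \<and> V y = v')" for u' v'
  have U: "prob (\<lambda>y. K y = k \<and> U y = u') = q u' v + q u' (\<not> v)" for u'
    unfolding q_def by (subst prob_split[where G = "\<lambda>y. V y = v"]) (auto intro!: arg_cong2[where f="(+)"] prob_cong)
  have V: "prob (\<lambda>y. K y = k \<and> V y = v) = q u v + q (\<not> u) v"
    unfolding q_def by (subst prob_split[where G = "\<lambda>y. U y = u"]) (auto intro!: arg_cong2[where f="(+)"] prob_cong)
  have UV: "prob (\<lambda>y. K y = k \<and> (U y \<noteq> V y) = (u \<noteq> v)) = q u v + q (\<not> u) (\<not> v)"
    unfolding q_def by (subst prob_split[where G = "\<lambda>y. U y = u"]) (auto intro!: arg_cong2[where f="(+)"] prob_cong)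
  have "prob (\<lambda>y. K y = k) = prob (\<lambda>y. K y = k \<and> U y = u) + prob (\<lambda>y. K y = k \<and> U y = (\<not> u))"
    by (subst prob_split[where G = "\<lambda>y. U y = u"]) (auto intro!: arg_cong2[where f="(+)"] prob_cong)
  then have K: "prob (\<lambda>y. K y = k) = q u v + q u (\<not> v) + q (\<not> u) v + q (\<not> u) (\<not> v)"
    by (simp add: U)
  show ?thesis
    unfolding K U V UV by (fold q_def, rule sum4_mult_square_le) (simp_all add: q_def prob_nonneg)
qed

lemma cond_entropy_xor_le:
  fixes K :: "'w \<Rightarrow> 'k" and U V :: "'w \<Rightarrow> bool"
  shows "cond_entropy (\<lambda>x. U x \<noteq> V x) K + cond_entropy U K + cond_entropy V K
     \<le> 2 * cond_entropy (\<lambda>x. (U x, V x)) K"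
proof -
  define pk where "pk x = prob (\<lambda>y. K y = K x)" for x
  define pu where "pu x = prob (\<lambda>y. (K y, U y) = (K x, U x))" for x
  define pv where "pv x = prob (\<lambda>y. (K y, V y) = (K x, V x))" for x
  define pz where "pz x = prob (\<lambda>y. (K y, U y \<noteq> V y) = (K x, U x \<noteq> V x))" for x
  define puv where "puv x = prob (\<lambda>y. (K y, U y, V y) = (K x, U x, V x))" for x
  have "(\<Sum>x\<in>\<Omega>. w x * (log 2 (pk x) + 2 * log 2 (puv x)))
      \<le> (\<Sum>x\<in>\<Omega>. w x * (log 2 (pz x) + log 2 (pu x) + log 2 (pv x)))"
  proof (rule sum_weight_mono)
    fix x assume x: "x \<in> \<Omega>" "0 < w x"
    have pos: "0 < pk x" "0 < pu x" "0 < pv x" "0 < pz x" "0 < puv x"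
      unfolding pk_def pu_def pv_def pz_def puv_def using prob_pos[OF x(1) _ x(2)] by simp_all
    have "pk x * (puv x)\<^sup>2 \<le> pz x * pu x * pv x"
      using prob_xor_inequality[of K "K x" U "U x" V "V x"]
      unfolding pk_def pu_def pv_def pz_def puv_def by simp
    then have "log 2 (pk x * (puv x)\<^sup>2) \<le> log 2 (pz x * pu x * pv x)"
      using pos by simp
    then show "log 2 (pk x) + 2 * log 2 (puv x) \<le> log 2 (pz x) + log 2 (pu x) + log 2 (pv x)"
      using pos by (simp add: log_mult log_nat_power)
  qed
  then show ?thesis
    unfolding cond_entropy_def entropy_def pk_def pu_def pv_def pz_def puv_def
    by (simp add: distrib_left sum.distrib sum_negf mult.left_commute[of _ 2] sum_distrib_left[symmetric])
qed

lemma cond_entropy_cong: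
  assumes "\<And>x y. x \<in> \<Omega> \<Longrightarrow> y \<in> \<Omega> \<Longrightarrow> F x = F y \<longleftrightarrow> G x = G y"
  shows "cond_entropy F K = cond_entropy G K"
proof -
  have "entropy (\<lambda>x. (K x, F x)) = entropy (\<lambda>x. (K x, G x))"
    by (rule entropy_cong) (simp add: assms)
  then show ?thesis unfolding cond_entropy_def by simp
qed

lemma cond_entropy_mono:
  assumes "\<And>x y. x \<in> \<Omega> \<Longrightarrow> y \<in> \<Omega> \<Longrightarrow> F x = F y \<Longrightarrow> G x = G y"
  shows "cond_entropy G K \<le> cond_entropy F K"
proof -
  have "entropy (\<lambda>x. (K x, G x)) \<le> entropy (\<lambda>x. (K x, F x))"
    by (rule entropy_mono) (use assms in blast)
  then show ?thesis unfolding cond_entropy_def by simp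
qed

lemma cond_entropy_nonneg: "0 \<le> cond_entropy F K"
  unfolding cond_entropy_def using entropy_mono[of "\<lambda>x. (K x, F x)" K] by simp

lemma cond_entropy_bool_le_1:
  fixes Z :: "'w \<Rightarrow> bool"
  shows "cond_entropy Z K \<le> 1"
  unfolding cond_entropy_def using entropy_pair_le[of K Z] by simp

lemma cond_entropy_chain:
  "cond_entropy (\<lambda>x. (F x, G x)) K = cond_entropy F K + cond_entropy G (\<lambda>x. (K x, F x))"
proof -
  have "entropy (\<lambda>x. (K x, F x, G x)) = entropy (\<lambda>x. ((K x, F x), G x))"
    by (rule entropy_cong) auto
  then show ?thesis unfolding cond_entropy_def by simp
qed

lemma cond_entropy_subadditive:
  "cond_entropy (\<lambda>x. (F x, G x)) K \<le> cond_entropy F K + cond_entropy G K"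
  unfolding cond_entropy_def using entropy_submodular[of K F G] by simp

definition mutual_information :: "('w \<Rightarrow> 'a) \<Rightarrow> ('w \<Rightarrow> 'b) \<Rightarrow> real" where
  "mutual_information F G =
     (\<Sum>a\<in>F ` \<Omega>. \<Sum>b\<in>G ` \<Omega>.
        let pab = prob (\<lambda>x. F x = a \<and> G x = b); pa = prob (\<lambda>x. F x = a); pb = prob (\<lambda>x. G x = b)
        in if pab = 0 then 0 else pab * log 2 (pab / (pa * pb)))"

lemma sum_weight_pair:
  "(\<Sum>x\<in>\<Omega>. w x * \<phi> (F x, G x)) = (\<Sum>a\<in>F ` \<Omega>. \<Sum>b\<in>G ` \<Omega>. prob (\<lambda>x. F x = a \<and> G x = b) * \<phi> (a, b))"
proof -
  have "(\<Sum>x\<in>\<Omega>. w x * \<phi> (F x, G x)) = (\<Sum>t\<in>(\<lambda>x. (F x, G x)) ` \<Omega>. prob (\<lambda>x. (F x, G x) = t) * \<phi> t)"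
    by (rule sum_weight_comp)
  also have "\<dots> = (\<Sum>t\<in>F ` \<Omega> \<times> G ` \<Omega>. prob (\<lambda>x. (F x, G x) = t) * \<phi> t)"
  proof (rule sum.mono_neutral_left)
    show "\<forall>t\<in>F ` \<Omega> \<times> G ` \<Omega> - (\<lambda>x. (F x, G x)) ` \<Omega>. prob (\<lambda>x. (F x, G x) = t) * \<phi> t = 0"
    proof
      fix t assume "t \<in> F ` \<Omega> \<times> G ` \<Omega> - (\<lambda>x. (F x, G x)) ` \<Omega>"
      then have "t \<notin> (\<lambda>x. (F x, G x)) ` \<Omega>" by blast
      then have "prob (\<lambda>x. (F x, G x) = t) = prob (\<lambda>x. False)" by (intro prob_cong) blast
      then show "prob (\<lambda>x. (F x, G x) = t) * \<phi> t = 0" by (simp add: prob_def)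
    qed
  qed (auto simp: finite_space)
  finally show ?thesis by (simp add: sum.cartesian_product')
qed

lemma mutual_information_eq: "mutual_information F G = entropy F + entropy G - entropy (\<lambda>x. (F x, G x))"
proof -
  define L where "L t = log 2 (prob (\<lambda>x. F x = fst t \<and> G x = snd t))
      - log 2 (prob (\<lambda>x. F x = fst t)) - log 2 (prob (\<lambda>x. G x = snd t))" for t
  have "(let pab = prob (\<lambda>x. F x = a \<and> G x = b); pa = prob (\<lambda>x. F x = a); pb = prob (\<lambda>x. G x = b)
        in if pab = 0 then 0 else pab * log 2 (pab / (pa * pb)))
      = prob (\<lambda>x. F x = a \<and> G x = b) * L (a, b)" for a b
  proof (cases "prob (\<lambda>x. F x = a \<and> G x = b) = 0")
    case False
    then have pab: "0 < prob (\<lambda>x. F x = a \<and> G x = b)" using prob_nonneg by (simp add: order_less_le)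
    moreover have "prob (\<lambda>x. F x = a \<and> G x = b) \<le> prob (\<lambda>x. F x = a)"
      "prob (\<lambda>x. F x = a \<and> G x = b) \<le> prob (\<lambda>x. G x = b)"
      by (auto intro: prob_mono)
    ultimately have "0 < prob (\<lambda>x. F x = a)" "0 < prob (\<lambda>x. G x = b)" by linarith+
    with pab False show ?thesis by (simp add: L_def Let_def log_divide log_mult)
  qed simp
  then have "mutual_information F G = (\<Sum>x\<in>\<Omega>. w x * L (F x, G x))"
    unfolding mutual_information_def sum_weight_pair by simp
  also have "\<dots> = entropy F + entropy G - entropy (\<lambda>x. (F x, G x))"
    unfolding entropy_def L_def by (simp add: sum_subtractf sum_negf right_diff_distrib)
  finally show ?thesis .
qed

end

section \<open>Entropy of the sum of two bits\<close>

lemma int_bounds_of_approx: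
  fixes t d :: real
  assumes "\<bar>t - of_int k\<bar> \<le> d" "0 \<le> t" "t \<le> of_int n" "d < 1"
  shows "0 \<le> k \<and> k \<le> n"
proof -
  have "of_int k > (-1 :: real)" "of_int k < of_int n + (1 :: real)" using assms by linarith+
  then show ?thesis by linarith
qed

text \<open>The value of H(U \<oplus> V | K) forced for bits U, V by H(U | K) = \<alpha>, H(V | K) = \<beta> and
  H(U, V | K) = \<gamma> with \<alpha>, \<beta>, \<gamma> integers: for \<gamma> = 0 both bits are determined by K, for \<gamma> = 2
  they are independent fair bits given K, and for \<gamma> = 1 the sum is a fair bit unless U and V are
  both fair, in which case each determines the other.\<close>

definition xor_level :: "int \<Rightarrow> int \<Rightarrow> int \<Rightarrow> int" where
  "xor_level \<alpha> \<beta> \<gamma> = (if \<gamma> = 0 then 0 else if \<gamma> = 2 then 1 else if \<alpha> = 0 \<or> \<beta> = 0 then 1 else 0)"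

lemma xor_level_approx:
  fixes a b c z d :: real and \<alpha> \<beta> \<gamma> :: int
  assumes "0 \<le> a" "a \<le> 1" "0 \<le> b" "b \<le> 1" "0 \<le> z" "z \<le> 1"
    and "a \<le> c" "c \<le> a + b" "c \<le> z + a" "c \<le> z + b" "z + a + b \<le> 2 * c"
    and "\<bar>a - \<alpha>\<bar> \<le> d" "\<bar>b - \<beta>\<bar> \<le> d" "\<bar>c - \<gamma>\<bar> \<le> d" "d < 1/4"
  shows "\<bar>z - xor_level \<alpha> \<beta> \<gamma>\<bar> \<le> 4 * d"
proof -
  have "\<alpha> = 0 \<or> \<alpha> = 1" "\<beta> = 0 \<or> \<beta> = 1" "\<gamma> = 0 \<or> \<gamma> = 1 \<or> \<gamma> = 2"
    using int_bounds_of_approx[of a \<alpha> d 1] int_bounds_of_approx[of b \<beta> d 1]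
      int_bounds_of_approx[of c \<gamma> d 2] assms by auto
  then show ?thesis
    using assms unfolding xor_level_def abs_le_iff by (elim disjE) (simp_all; linarith)+
qed

context finite_prob
begin

lemma cond_entropy_xor_approx:
  fixes K :: "'w \<Rightarrow> 'k" and U V :: "'w \<Rightarrow> bool" and \<alpha> \<beta> \<gamma> :: int
  assumes "\<bar>cond_entropy U K - \<alpha>\<bar> \<le> d" "\<bar>cond_entropy V K - \<beta>\<bar> \<le> d"
    and "\<bar>cond_entropy (\<lambda>x. (U x, V x)) K - \<gamma>\<bar> \<le> d" and "d < 1/4"
  shows "\<bar>cond_entropy (\<lambda>x. U x \<noteq> V x) K - xor_level \<alpha> \<beta> \<gamma>\<bar> \<le> 4 * d"
proof (rule xor_level_approx[where a = "cond_entropy U K" and b = "cond_entropy V K"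
      and c = "cond_entropy (\<lambda>x. (U x, V x)) K"])
  have "cond_entropy (\<lambda>x. (U x, V x)) K = cond_entropy (\<lambda>x. (U x \<noteq> V x, U x)) K"
    by (rule cond_entropy_cong) auto
  also have "\<dots> \<le> cond_entropy (\<lambda>x. U x \<noteq> V x) K + cond_entropy U K"
    by (rule cond_entropy_subadditive)
  finally show "cond_entropy (\<lambda>x. (U x, V x)) K \<le> cond_entropy (\<lambda>x. U x \<noteq> V x) K + cond_entropy U K" .
  have "cond_entropy (\<lambda>x. (U x, V x)) K = cond_entropy (\<lambda>x. (U x \<noteq> V x, V x)) K"
    by (rule cond_entropy_cong) auto
  also have "\<dots> \<le> cond_entropy (\<lambda>x. U x \<noteq> V x) K + cond_entropy V K"
    by (rule cond_entropy_subadditive)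
  finally show "cond_entropy (\<lambda>x. (U x, V x)) K \<le> cond_entropy (\<lambda>x. U x \<noteq> V x) K + cond_entropy V K" .
  show "cond_entropy U K \<le> cond_entropy (\<lambda>x. (U x, V x)) K"
    by (rule cond_entropy_mono) auto
qed (use assms cond_entropy_xor_le[of U V K] cond_entropy_subadditive[of U V K] in
      \<open>simp_all add: cond_entropy_nonneg cond_entropy_bool_le_1\<close>)

end

section \<open>Summing bits into one coordinate\<close>

definition bits :: "(nat \<Rightarrow> 'w \<Rightarrow> bool) \<Rightarrow> nat set \<Rightarrow> 'w \<Rightarrow> nat \<Rightarrow> bool" where
  "bits R A x = (\<lambda>l. l \<in> A \<and> R l x)"

lemma bits_eq_iff: "bits R A x = bits R A y \<longleftrightarrow> (\<forall>l\<in>A. R l x = R l y)"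
  unfolding bits_def fun_eq_iff by blast

lemma bits_insert_eq_iff:
  "i \<notin> B \<Longrightarrow> bits R (insert i B) x = bits R (insert i B) y \<longleftrightarrow> bits R B x = bits R B y \<and> R i x = R i y"
  unfolding bits_eq_iff by auto

lemma bits_cong: "(\<And>l. l \<in> A \<Longrightarrow> R l = R' l) \<Longrightarrow> bits R A = bits R' A"
  unfolding bits_def fun_eq_iff by auto

text \<open>Write R[A] for bits R A. If k A predicts H(R[A] | Y) for all A, then xor_step_level i j k A
  predicts it after bit i has been replaced by bit i \<oplus> bit j: only the sets A containing i but
  not j are affected, and for them H(R[A] | Y) = H(R[B] | Y) + H(R i \<oplus> R j | Y, R[B]) with
  B = A - {i}.\<close>

definition xor_step_level :: "nat \<Rightarrow> nat \<Rightarrow> (nat set \<Rightarrow> int) \<Rightarrow> nat set \<Rightarrow> int" where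
  "xor_step_level i j k A = (if i \<in> A \<and> j \<notin> A then
     (let B = A - {i} in k B + xor_level (k A - k B) (k (insert j B) - k B) (k (insert j A) - k B))
   else k A)"

lemma bits_xor_eq_iff:
  assumes "i \<in> A" "j \<in> A" "i \<noteq> j"
  shows "bits (R(i := \<lambda>x. R i x \<noteq> R j x)) A x = bits (R(i := \<lambda>x. R i x \<noteq> R j x)) A y
    \<longleftrightarrow> bits R A x = bits R A y"
proof -
  have "(\<forall>l\<in>A. P l) \<longleftrightarrow> P i \<and> P j \<and> (\<forall>l\<in>A - {i, j}. P l)" for P
    using assms by blast
  then show ?thesis unfolding bits_eq_iff using assms(3) by auto
qed

primrec xor_into :: "nat \<Rightarrow> (nat \<Rightarrow> 'w \<Rightarrow> bool) \<Rightarrow> nat list \<Rightarrow> nat \<Rightarrow> 'w \<Rightarrow> bool" where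
  "xor_into i R [] = R"
| "xor_into i R (j # js) = (xor_into i R js)(i := (\<lambda>x. xor_into i R js i x \<noteq> xor_into i R js j x))"

primrec xor_into_level :: "nat \<Rightarrow> (nat set \<Rightarrow> int) \<Rightarrow> nat list \<Rightarrow> nat set \<Rightarrow> int" where
  "xor_into_level i k [] = k"
| "xor_into_level i k (j # js) = xor_step_level i j (xor_into_level i k js)"

lemma xor_into_other: "l \<noteq> i \<Longrightarrow> xor_into i R js l = R l"
  by (induction js) auto

context finite_prob
begin

lemma cond_entropy_bits_split:
  assumes "\<And>x y. x \<in> \<Omega> \<Longrightarrow> y \<in> \<Omega> \<Longrightarrow>
      bits R A x = bits R A y \<longleftrightarrow> bits R' B x = bits R' B y \<and> G x = G y"
  shows "cond_entropy (bits R A) Y = cond_entropy (bits R' B) Y + cond_entropy G (\<lambda>x. (Y x, bits R' B x))"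
proof -
  have "cond_entropy (bits R A) Y = cond_entropy (\<lambda>x. (bits R' B x, G x)) Y"
    by (rule cond_entropy_cong) (simp add: assms)
  then show ?thesis by (simp add: cond_entropy_chain)
qed

lemma cond_entropy_bits_singleton: "cond_entropy (bits R {i}) Y = cond_entropy (R i) Y"
  by (rule cond_entropy_cong) (simp add: bits_eq_iff)

lemma cond_entropy_bits_xor_insert:
  fixes R :: "nat \<Rightarrow> 'w \<Rightarrow> bool" and i j :: nat
  defines "R' \<equiv> R(i := \<lambda>x. R i x \<noteq> R j x)"
  assumes B: "i \<notin> B" "j \<notin> B" "i \<noteq> j"
    and approx: "\<And>C. C \<in> {B, insert i B, insert j B, insert j (insert i B)} \<Longrightarrow>
      \<bar>cond_entropy (bits R C) Y - k C\<bar> \<le> e"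
    and e: "e < 1/8"
  shows "\<bar>cond_entropy (bits R' (insert i B)) Y - (k B + xor_level (k (insert i B) - k B)
      (k (insert j B) - k B) (k (insert j (insert i B)) - k B))\<bar> \<le> 9 * e"
proof -
  define K where "K x = (Y x, bits R B x)" for x
  have "bits R' B = bits R B" by (intro bits_cong) (auto simp: R'_def B(1))
  moreover have "R' i = (\<lambda>x. R i x \<noteq> R j x)" by (simp add: R'_def)
  ultimately have xor_eq: "cond_entropy (bits R' (insert i B)) Y
      = cond_entropy (bits R B) Y + cond_entropy (\<lambda>x. R i x \<noteq> R j x) K"
    unfolding K_def by (intro cond_entropy_bits_split) (simp add: bits_insert_eq_iff B(1))
  have "cond_entropy (bits R (insert i B)) Y = cond_entropy (bits R B) Y + cond_entropy (R i) K"
    unfolding K_def by (rule cond_entropy_bits_split) (simp add: bits_insert_eq_iff B(1))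
  then have U: "\<bar>cond_entropy (R i) K - (k (insert i B) - k B)\<bar> \<le> 2 * e"
    using approx[of "insert i B"] approx[of B] unfolding abs_le_iff by simp
  have "cond_entropy (bits R (insert j B)) Y = cond_entropy (bits R B) Y + cond_entropy (R j) K"
    unfolding K_def by (rule cond_entropy_bits_split) (simp add: bits_insert_eq_iff B(2))
  then have V: "\<bar>cond_entropy (R j) K - (k (insert j B) - k B)\<bar> \<le> 2 * e"
    using approx[of "insert j B"] approx[of B] unfolding abs_le_iff by simp
  have "cond_entropy (bits R (insert j (insert i B))) Y
      = cond_entropy (bits R B) Y + cond_entropy (\<lambda>x. (R i x, R j x)) K"
    unfolding K_def
    by (rule cond_entropy_bits_split) (simp add: bits_insert_eq_iff B not_sym[OF B(3)] conj_commute conj_left_commute)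
  then have UV: "\<bar>cond_entropy (\<lambda>x. (R i x, R j x)) K - (k (insert j (insert i B)) - k B)\<bar> \<le> 2 * e"
    using approx[of "insert j (insert i B)"] approx[of B] unfolding abs_le_iff by simp
  have "\<bar>cond_entropy (\<lambda>x. R i x \<noteq> R j x) K - xor_level (k (insert i B) - k B)
      (k (insert j B) - k B) (k (insert j (insert i B)) - k B)\<bar> \<le> 4 * (2 * e)"
    using U V UV e by (intro cond_entropy_xor_approx) simp_all
  then show ?thesis using approx[of B] unfolding xor_eq abs_le_iff by simp
qed

lemma cond_entropy_bits_xor_step:
  assumes approx: "\<forall>A\<subseteq>I. \<bar>cond_entropy (bits R A) Y - k A\<bar> \<le> e"
    and ij: "i \<in> I" "j \<in> I" "i \<noteq> j" and e: "e < 1/8"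
  shows "\<forall>A\<subseteq>I. \<bar>cond_entropy (bits (R(i := \<lambda>x. R i x \<noteq> R j x)) A) Y - xor_step_level i j k A\<bar> \<le> 9 * e"
proof (intro allI impI)
  fix A assume A: "A \<subseteq> I"
  define R' where "R' = R(i := \<lambda>x. R i x \<noteq> R j x)"
  have "0 \<le> e" using approx by (meson abs_ge_zero empty_subsetI order.trans)
  consider (unchanged) "i \<notin> A" | (both) "i \<in> A" "j \<in> A" | (xor) "i \<in> A" "j \<notin> A" by blast
  then show "\<bar>cond_entropy (bits R' A) Y - xor_step_level i j k A\<bar> \<le> 9 * e"
  proof cases
    case unchanged
    then have "bits R' A = bits R A" by (intro bits_cong) (auto simp: R'_def)
    then show ?thesis using approx[rule_format, OF A] \<open>0 \<le> e\<close> unchanged by (simp add: xor_step_level_def)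
  next
    case both
    have "cond_entropy (bits R' A) Y = cond_entropy (bits R A) Y"
      unfolding R'_def using both ij by (intro cond_entropy_cong bits_xor_eq_iff)
    then show ?thesis using approx[rule_format, OF A] \<open>0 \<le> e\<close> both by (simp add: xor_step_level_def)
  next
    case xor
    define B where "B = A - {i}"
    have A_eq: "A = insert i B" and B: "i \<notin> B" "j \<notin> B" "i \<noteq> j" using xor ij(3) unfolding B_def by auto
    have "\<bar>cond_entropy (bits R C) Y - k C\<bar> \<le> e" if "C \<in> {B, insert i B, insert j B, insert j (insert i B)}" for C
    proof -
      have "C \<subseteq> I" using that A ij unfolding A_eq by auto
      then show ?thesis using approx by blast
    qed
    from cond_entropy_bits_xor_insert[OF B this e]
    have "\<bar>cond_entropy (bits R' A) Y - (k B + xor_level (k A - k B) (k (insert j B) - k B) (k (insert j A) - k B))\<bar>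
        \<le> 9 * e"
      unfolding R'_def A_eq .
    moreover have "xor_step_level i j k A = k B + xor_level (k A - k B) (k (insert j B) - k B) (k (insert j A) - k B)"
      unfolding xor_step_level_def B_def Let_def using xor by simp
    ultimately show ?thesis by simp
  qed
qed

lemma cond_entropy_bits_xor_into:
  assumes approx: "\<forall>A\<subseteq>I. \<bar>cond_entropy (bits R A) Y - k A\<bar> \<le> e"
    and "i \<in> I" "set js \<subseteq> I" "i \<notin> set js" and "9 ^ length js * e < 1/8"
  shows "\<forall>A\<subseteq>I. \<bar>cond_entropy (bits (xor_into i R js) A) Y - xor_into_level i k js A\<bar> \<le> 9 ^ length js * e"
  using assms(3-5)
proof (induction js)
  case Nil
  then show ?case using approx by simp
next
  case (Cons j js)
  have "0 \<le> e" using approx by (meson abs_ge_zero empty_subsetI order.trans)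
  then have "9 ^ length js * e \<le> 9 ^ length (j # js) * e" by (simp add: mult_right_mono)
  then have small: "9 ^ length js * e < 1/8" using Cons.prems by linarith
  with Cons have "\<forall>A\<subseteq>I. \<bar>cond_entropy (bits (xor_into i R js) A) Y - xor_into_level i k js A\<bar> \<le> 9 ^ length js * e"
    by simp
  then have "\<forall>A\<subseteq>I. \<bar>cond_entropy (bits (xor_into i R (j # js)) A) Y - xor_into_level i k (j # js) A\<bar>
      \<le> 9 * (9 ^ length js * e)"
    unfolding xor_into.simps xor_into_level.simps
    by (rule cond_entropy_bits_xor_step) (use Cons.prems \<open>i \<in> I\<close> small in auto)
  then show ?case by (simp add: mult.assoc del: fun_upd_apply)
qed

end

section \<open>Binary multiple access channels\<close>

lemma finite_users: "finite (users m)" and card_users: "card (users m) = m"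
  unfolding users_def by auto

lemma users_pos: "S \<subseteq> users m \<Longrightarrow> S \<noteq> {} \<Longrightarrow> 0 < m"
  unfolding users_def by auto

lemma bij_betw_inputs_Pow: "bij_betw (\<lambda>x. {i. x i}) (inputs m) (Pow (users m))"
  by (rule bij_betw_byWitness[where f' = "\<lambda>A i. i \<in> A"]) (auto simp: inputs_def)

lemma finite_inputs: "finite (inputs m)" and card_inputs: "card (inputs m) = 2 ^ m"
  using bij_betw_finite[OF bij_betw_inputs_Pow] bij_betw_same_card[OF bij_betw_inputs_Pow]
  by (simp_all add: finite_users card_Pow card_users)

lemma card_inputs_agree:
  assumes S: "S \<subseteq> users m" and x0: "x0 \<in> inputs m"
  shows "card {x\<in>inputs m. \<forall>i\<in>S. x i = x0 i} = 2 ^ (m - card S)"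
proof -
  have "bij_betw (\<lambda>x. {i\<in>users m - S. x i}) {x\<in>inputs m. \<forall>i\<in>S. x i = x0 i} (Pow (users m - S))"
    by (rule bij_betw_byWitness[where f' = "\<lambda>T i. i \<in> T \<or> (i \<in> S \<and> x0 i)"])
      (use S x0 in \<open>auto simp: inputs_def fun_eq_iff\<close>)
  then have "card {x\<in>inputs m. \<forall>i\<in>S. x i = x0 i} = card (Pow (users m - S))"
    by (rule bij_betw_same_card)
  also have "\<dots> = 2 ^ (m - card S)"
    using S by (simp add: card_Pow finite_users card_Diff_subset finite_subset[OF S finite_users] card_users)
  finally show ?thesis .
qed

lemma odd_card_flip:
  assumes "finite S" "i \<in> S"
  shows "odd (card {l\<in>S. (x(i := \<not> x i)) l}) \<longleftrightarrow> even (card {l\<in>S. x l})"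
proof (cases "x i")
  case True
  then have "{l\<in>S. (x(i := \<not> x i)) l} = {l\<in>S. x l} - {i}" by auto
  moreover have "Suc (card ({l\<in>S. x l} - {i})) = card {l\<in>S. x l}"
    using assms True by (intro card_Suc_Diff1) auto
  ultimately show ?thesis by (metis even_Suc)
next
  case False
  then have "{l\<in>S. (x(i := \<not> x i)) l} = insert i {l\<in>S. x l}" using assms by auto
  then show ?thesis using False assms by (simp del: fun_upd_apply)
qed

lemma card_inputs_parity:
  assumes S: "S \<subseteq> users m" "S \<noteq> {}"
  shows "card {x\<in>inputs m. odd (card {i\<in>S. x i}) = b} = 2 ^ (m - 1)"
proof -
  obtain i where i: "i \<in> S" using S by auto
  have fin_S: "finite S" using S finite_users finite_subset by blast
  define Par where "Par b = {x\<in>inputs m. odd (card {i\<in>S. x i}) = b}" for b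
  define flip where "flip x = x(i := \<not> x i)" for x :: "nat \<Rightarrow> bool"
  have flip_Par: "flip x \<in> Par (\<not> b)" if "x \<in> Par b" for x b
  proof -
    have "flip x \<in> inputs m" using that i S unfolding Par_def flip_def inputs_def by auto
    moreover have "odd (card {l\<in>S. flip x l}) = (\<not> b)"
      using that odd_card_flip[OF fin_S i, of x] unfolding Par_def flip_def by (simp del: fun_upd_apply) blast
    ultimately show ?thesis unfolding Par_def by simp
  qed
  have "bij_betw flip (Par True) (Par False)"
  proof (rule bij_betw_byWitness[where f' = flip])
    show "\<forall>x\<in>Par True. flip (flip x) = x" "\<forall>x\<in>Par False. flip (flip x) = x"
      by (simp_all add: flip_def)
    show "flip ` Par True \<subseteq> Par False" "flip ` Par False \<subseteq> Par True"
      using flip_Par by fastforce+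
  qed
  then have "card (Par True) = card (Par False)" by (rule bij_betw_same_card)
  moreover have "card (Par True) + card (Par False) = 2 ^ m"
  proof -
    have "Par True \<union> Par False = inputs m" "Par True \<inter> Par False = {}" unfolding Par_def by auto
    then show ?thesis using card_Un_disjoint[of "Par True" "Par False"] finite_inputs card_inputs
      by (metis finite_Un)
  qed
  moreover have "(2::nat) ^ m = 2 * 2 ^ (m - 1)"
    using users_pos[OF S] by (simp add: power_eq_if)
  ultimately have "card (Par b) = 2 ^ (m - 1)" for b
    by (cases b) simp_all
  then show ?thesis unfolding Par_def .
qed

lemma log2_ratio_pow: "s \<le> n \<Longrightarrow> - log 2 ((2::real) ^ (n - s) / 2 ^ n) = s"
  by (simp add: log_divide log_nat_power)

lemma Xsub_eq_iff: "Xsub A x = Xsub A y \<longleftrightarrow> (\<forall>i\<in>A. fst x i = fst y i)"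
  unfolding Xsub_def fun_eq_iff by blast

lemma Xdot_empty: "Xdot {} = (\<lambda>x. False)"
  unfolding Xdot_def fun_eq_iff by simp

lemma Xdot_insert:
  assumes "finite T" "j \<notin> T"
  shows "Xdot (insert j T) x \<longleftrightarrow> Xdot T x \<noteq> fst x j"
proof (cases "fst x j")
  case True
  then have "{i\<in>insert j T. fst x i} = insert j {i\<in>T. fst x i}" by auto
  then show ?thesis using True assms unfolding Xdot_def by simp
next
  case False
  then have "{i\<in>insert j T. fst x i} = {i\<in>T. fst x i}" by auto
  then show ?thesis using False unfolding Xdot_def by simp
qed

definition input_bit :: "nat \<Rightarrow> (nat \<Rightarrow> bool) \<times> nat \<Rightarrow> bool" where
  "input_bit l \<omega> = fst \<omega> l"

lemma bits_input_bit: "bits input_bit A = Xsub A"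
  unfolding bits_def input_bit_def Xsub_def fun_eq_iff by auto

lemma xor_into_input_bit:
  "distinct js \<Longrightarrow> i \<notin> set js \<Longrightarrow> xor_into i input_bit js i = Xdot (insert i (set js))"
proof (induction js)
  case Nil
  show ?case by (auto simp: fun_eq_iff input_bit_def Xdot_insert Xdot_empty)
next
  case (Cons j js)
  then have "j \<notin> insert i (set js)" "insert i (set (j # js)) = insert j (insert i (set js))" by auto
  then have "Xdot (insert i (set (j # js))) x \<longleftrightarrow> Xdot (insert i (set js)) x \<noteq> fst x j" for x
    by (simp add: Xdot_insert)
  moreover have "xor_into i input_bit js j = input_bit j" using Cons.prems by (intro xor_into_other) auto
  moreover have "xor_into i input_bit js i = Xdot (insert i (set js))" using Cons by simp
  ultimately show ?case unfolding fun_eq_iff by (simp add: input_bit_def)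
qed

lemma abs_diff_round_less:
  fixes t \<epsilon> :: real
  assumes "\<bar>t - of_int k\<bar> < \<epsilon>" "\<epsilon> \<le> 1/2"
  shows "\<bar>t - of_int (round t)\<bar> < \<epsilon>"
  using assms round_unique'[of t k] by simp

text \<open>With r T the integer nearest to I(X[T]; Y, X[T^c]), input_level m r A is the integer nearest
  to H(X[A] | Y), by cond_entropy_Xsub below.\<close>

definition input_level :: "nat \<Rightarrow> (nat set \<Rightarrow> int) \<Rightarrow> nat set \<Rightarrow> int" where
  "input_level m r A = r (users m - A) - r (users m) + int (card A)"

text \<open>The predicate \<Phi> of the theorem: X[E_m]\<cdot>S is built from its least coordinate by adding the
  other coordinates of S one at a time, and its predicted entropy given Y is 0.\<close>

definition parity_determined :: "nat \<Rightarrow> (nat set \<Rightarrow> int) \<Rightarrow> nat set \<Rightarrow> bool" where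
  "parity_determined m r S \<longleftrightarrow> S \<noteq> {} \<and>
     xor_into_level (Min S) (input_level m r) (sorted_list_of_set (S - {Min S})) {Min S} = 0"

locale mac =
  fixes m :: nat and Out :: "nat set" and W :: "(nat \<Rightarrow> bool) \<Rightarrow> nat \<Rightarrow> real"
  assumes binary_mac: "binary_mac m Out W"

sublocale mac \<subseteq> finite_prob "omega m Out" "\<lambda>\<omega>. W (fst \<omega>) (snd \<omega>) / 2 ^ m"
proof
  show "finite (omega m Out)"
    using binary_mac finite_inputs unfolding omega_def binary_mac_def by simp
  show "0 \<le> W (fst x) (snd x) / 2 ^ m" if "x \<in> omega m Out" for x
    using that binary_mac unfolding binary_mac_def omega_def by auto
  have "(\<Sum>x\<in>omega m Out. W (fst x) (snd x) / 2 ^ m) = (\<Sum>a\<in>inputs m. (\<Sum>y\<in>Out. W a y) / 2 ^ m)"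
    unfolding omega_def by (simp add: sum.cartesian_product' sum_divide_distrib)
  also have "\<dots> = 1"
    using binary_mac by (simp add: binary_mac_def card_inputs)
  finally show "(\<Sum>x\<in>omega m Out. W (fst x) (snd x) / 2 ^ m) = 1" .
qed

context mac
begin

lemma mutual_info_eq: "mutual_info m Out W F G = entropy F + entropy G - entropy (\<lambda>x. (F x, G x))"
proof -
  have "prob_ev m Out W = prob" unfolding prob_ev_def prob_def fun_eq_iff by simp
  then have "mutual_info m Out W F G = mutual_information F G"
    unfolding mutual_info_def mutual_information_def by (rule arg_cong)
  then show ?thesis by (simp add: mutual_information_eq)
qed

lemma prob_input: "prob (\<lambda>\<omega>. F (fst \<omega>) = v) = card {x\<in>inputs m. F x = v} / 2 ^ m"
proof -
  have "prob (\<lambda>\<omega>. F (fst \<omega>) = v) = (\<Sum>x\<in>inputs m. \<Sum>y\<in>Out. if F x = v then W x y / 2 ^ m else 0)"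
    unfolding prob_def unfolding omega_def sum.cartesian_product' fst_conv snd_conv ..
  also have "\<dots> = (\<Sum>x\<in>inputs m. if F x = v then 1 / 2 ^ m else 0)"
    by (rule sum.cong) (use binary_mac in \<open>auto simp: binary_mac_def sum_divide_distrib[symmetric]\<close>)
  also have "\<dots> = card {x\<in>inputs m. F x = v} / 2 ^ m"
    by (simp add: sum.inter_filter[OF finite_inputs, symmetric])
  finally show ?thesis .
qed

lemma entropy_input_uniform:
  assumes "\<And>x. x \<in> inputs m \<Longrightarrow> card {z\<in>inputs m. F z = F x} = N"
  shows "entropy (\<lambda>\<omega>. F (fst \<omega>)) = - log 2 (N / 2 ^ m)"
proof -
  have "entropy (\<lambda>\<omega>. F (fst \<omega>)) = (\<Sum>\<omega>\<in>omega m Out. W (fst \<omega>) (snd \<omega>) / 2 ^ m * - log 2 (N / 2 ^ m))"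
    unfolding entropy_def
  proof (rule sum.cong[OF refl])
    fix \<omega> assume "\<omega> \<in> omega m Out"
    then have "fst \<omega> \<in> inputs m" by (auto simp: omega_def)
    then show "W (fst \<omega>) (snd \<omega>) / 2 ^ m * - log 2 (prob (\<lambda>\<omega>'. F (fst \<omega>') = F (fst \<omega>)))
        = W (fst \<omega>) (snd \<omega>) / 2 ^ m * - log 2 (N / 2 ^ m)"
      by (simp add: prob_input assms)
  qed
  also have "\<dots> = - log 2 (N / 2 ^ m)" by (simp only: sum_distrib_right[symmetric] weight_sum mult_1)
  finally show ?thesis .
qed

lemma entropy_Xsub: assumes "S \<subseteq> users m" shows "entropy (Xsub S) = card S"
proof -
  have "entropy (\<lambda>\<omega>. (\<lambda>i. fst \<omega> i \<and> i \<in> S)) = - log 2 (real (2 ^ (m - card S)) / 2 ^ m)"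
  proof (rule entropy_input_uniform)
    fix x assume "x \<in> inputs m"
    moreover have "{z \<in> inputs m. (\<lambda>i. z i \<and> i \<in> S) = (\<lambda>i. x i \<and> i \<in> S)} = {z\<in>inputs m. \<forall>i\<in>S. z i = x i}"
      by (auto simp: fun_eq_iff)
    ultimately show "card {z \<in> inputs m. (\<lambda>i. z i \<and> i \<in> S) = (\<lambda>i. x i \<and> i \<in> S)} = 2 ^ (m - card S)"
      using card_inputs_agree[OF assms] by simp
  qed
  moreover have "card S \<le> m" using card_mono[OF finite_users assms] card_users by simp
  ultimately show ?thesis unfolding Xsub_def using log2_ratio_pow by simp
qed

lemma entropy_Xdot: assumes "S \<subseteq> users m" "S \<noteq> {}" shows "entropy (Xdot S) = 1"
proof -
  have "entropy (\<lambda>\<omega>. odd (card {i\<in>S. fst \<omega> i})) = - log 2 (real (2 ^ (m - 1)) / 2 ^ m)"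
    by (rule entropy_input_uniform) (rule card_inputs_parity[OF assms])
  moreover have "1 \<le> m" using users_pos[OF assms] by simp
  ultimately show ?thesis unfolding Xdot_def using log2_ratio_pow[of 1 m] by simp
qed

lemma mutual_info_Xsub:
  assumes "S \<subseteq> users m"
  shows "mutual_info m Out W (Xsub S) (YXcompl m S)
    = card S + entropy (\<lambda>x. (Yout x, Xsub (users m - S) x)) - entropy (\<lambda>x. (Yout x, Xsub (users m) x))"
proof -
  have "entropy (\<lambda>x. (Xsub S x, YXcompl m S x)) = entropy (\<lambda>x. (Yout x, Xsub (users m) x))"
    by (rule entropy_cong) (use assms in \<open>auto simp: YXcompl_def Xsub_eq_iff\<close>)
  moreover have "entropy (YXcompl m S) = entropy (\<lambda>x. (Yout x, Xsub (users m - S) x))"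
    unfolding YXcompl_def ..
  ultimately show ?thesis by (simp add: mutual_info_eq entropy_Xsub[OF assms])
qed

lemma cond_entropy_Xsub:
  assumes A: "A \<subseteq> users m"
  shows "cond_entropy (Xsub A) Yout
    = mutual_info m Out W (Xsub (users m - A)) (YXcompl m (users m - A))
      - mutual_info m Out W (Xsub (users m)) (YXcompl m (users m)) + card A"
proof -
  define J where "J B = entropy (\<lambda>x. (Yout x, Xsub B x))" for B
  have "mutual_info m Out W (Xsub (users m - A)) (YXcompl m (users m - A)) = card (users m - A) + J A - J (users m)"
    using mutual_info_Xsub[of "users m - A"] A unfolding J_def by (simp add: double_diff)
  moreover have "mutual_info m Out W (Xsub (users m)) (YXcompl m (users m)) = card (users m) + J {} - J (users m)"
    using mutual_info_Xsub[of "users m"] unfolding J_def by simp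
  moreover have "entropy Yout = J {}"
    unfolding J_def by (rule entropy_cong) (simp add: Xsub_eq_iff)
  moreover have "real (card (users m - A)) + card A = card (users m)"
    using card_Diff_subset[OF finite_subset[OF A finite_users] A] card_mono[OF finite_users A] by simp
  ultimately show ?thesis unfolding cond_entropy_def J_def by simp
qed

lemma mutual_info_Xdot:
  assumes "S \<subseteq> users m" "S \<noteq> {}"
  shows "mutual_info m Out W (Xdot S) Yout = 1 - cond_entropy (Xdot S) Yout"
proof -
  have "entropy (\<lambda>x. (Xdot S x, Yout x)) = entropy (\<lambda>x. (Yout x, Xdot S x))"
    by (rule entropy_cong) auto
  then show ?thesis by (simp add: mutual_info_eq cond_entropy_def entropy_Xdot[OF assms])
qed

lemma mutual_info_Xdot_empty: "mutual_info m Out W (Xdot {}) Yout = 0"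
proof -
  have "entropy (\<lambda>x. (False, Yout x)) = entropy Yout" by (rule entropy_cong) auto
  then show ?thesis by (simp add: mutual_info_eq Xdot_empty entropy_const)
qed

lemma cond_entropy_Xdot_approx:
  assumes approx: "\<forall>A\<subseteq>users m. \<bar>cond_entropy (Xsub A) Yout - k A\<bar> \<le> e"
    and S: "S \<subseteq> users m" "S \<noteq> {}" and e: "9 ^ m * e < 1/8"
  shows "\<bar>cond_entropy (Xdot S) Yout - xor_into_level (Min S) k (sorted_list_of_set (S - {Min S})) {Min S}\<bar>
    \<le> 9 ^ m * e"
proof -
  define i where "i = Min S"
  define js where "js = sorted_list_of_set (S - {i})"
  have fin_S: "finite S" using S finite_subset finite_users by blast
  then have i: "i \<in> S" using S(2) unfolding i_def by (rule Min_in)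
  have js: "set js = S - {i}" "distinct js" "length js = card (S - {i})"
    using fin_S unfolding js_def by auto
  have "0 \<le> e" using approx by (meson abs_ge_zero empty_subsetI order.trans)
  moreover have "length js \<le> m"
    using js card_mono[OF finite_users, of "S - {i}"] S card_users by auto
  ultimately have len: "9 ^ length js * e \<le> 9 ^ m * e" by (simp add: mult_right_mono)
  have "i \<in> users m" "set js \<subseteq> users m" "i \<notin> set js" "9 ^ length js * e < 1/8"
    using i js S(1) len e by auto
  with approx have "\<forall>A\<subseteq>users m. \<bar>cond_entropy (bits (xor_into i input_bit js) A) Yout
      - xor_into_level i k js A\<bar> \<le> 9 ^ length js * e"
    unfolding bits_input_bit[symmetric] by (rule cond_entropy_bits_xor_into)
  moreover have "{i} \<subseteq> users m" using \<open>i \<in> users m\<close> by simp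
  ultimately have "\<bar>cond_entropy (bits (xor_into i input_bit js) {i}) Yout - xor_into_level i k js {i}\<bar>
      \<le> 9 ^ length js * e"
    by blast
  then have "\<bar>cond_entropy (bits (xor_into i input_bit js) {i}) Yout - xor_into_level i k js {i}\<bar>
      \<le> 9 ^ m * e"
    using len by linarith
  moreover have "xor_into i input_bit js i = Xdot S"
    using xor_into_input_bit[OF js(2)] js i by (simp add: insert_absorb)
  ultimately show ?thesis by (simp add: cond_entropy_bits_singleton i_def js_def)
qed

lemma cond_entropy_Xsub_approx:
  defines "r \<equiv> \<lambda>T. if T \<subseteq> users m then round (mutual_info m Out W (Xsub T) (YXcompl m T)) else 0"
  assumes near_int: "\<forall>S\<subseteq>users m. \<exists>k::int. \<bar>mutual_info m Out W (Xsub S) (YXcompl m S) - k\<bar> < \<epsilon>"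
    and "\<epsilon> \<le> 1/2"
  shows "\<forall>A\<subseteq>users m. \<bar>cond_entropy (Xsub A) Yout - input_level m r A\<bar> \<le> 2 * \<epsilon>"
proof -
  have round: "\<bar>mutual_info m Out W (Xsub T) (YXcompl m T) - r T\<bar> < \<epsilon>" if T: "T \<subseteq> users m" for T
  proof -
    obtain k :: int where "\<bar>mutual_info m Out W (Xsub T) (YXcompl m T) - k\<bar> < \<epsilon>"
      using near_int[rule_format, OF T] by blast
    then have "\<bar>mutual_info m Out W (Xsub T) (YXcompl m T) - round (mutual_info m Out W (Xsub T) (YXcompl m T))\<bar> < \<epsilon>"
      using \<open>\<epsilon> \<le> 1/2\<close> by (rule abs_diff_round_less)
    then show ?thesis using T unfolding r_def by simp
  qed
  show ?thesis
  proof (intro allI impI)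
    fix A assume "A \<subseteq> users m"
    then show "\<bar>cond_entropy (Xsub A) Yout - input_level m r A\<bar> \<le> 2 * \<epsilon>"
      using round[of "users m - A"] round[of "users m"]
      unfolding cond_entropy_Xsub[OF \<open>A \<subseteq> users m\<close>] input_level_def abs_less_iff abs_le_iff by simp
  qed
qed

lemma mutual_info_Xdot_by_parity_determined:
  assumes approx: "\<forall>A\<subseteq>users m. \<bar>cond_entropy (Xsub A) Yout - input_level m r A\<bar> \<le> e"
    and S: "S \<subseteq> users m" and small: "9 ^ m * e < \<delta>" "9 ^ m * e < 1/8"
  shows "(parity_determined m r S \<longrightarrow> 1 - \<delta> < mutual_info m Out W (Xdot S) Yout \<and> mutual_info m Out W (Xdot S) Yout \<le> 1)
    \<and> (\<not> parity_determined m r S \<longrightarrow> 0 \<le> mutual_info m Out W (Xdot S) Yout \<and> mutual_info m Out W (Xdot S) Yout < \<delta>)"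
proof (cases "S = {}")
  case True
  have "0 \<le> e" using approx by (meson abs_ge_zero empty_subsetI order.trans)
  then have "0 \<le> 9 ^ m * e" by simp
  then have "0 < \<delta>" using small(1) by linarith
  then show ?thesis using True by (simp add: mutual_info_Xdot_empty parity_determined_def)
next
  case False
  define q where "q = cond_entropy (Xdot S) Yout"
  define k where "k = xor_into_level (Min S) (input_level m r) (sorted_list_of_set (S - {Min S})) {Min S}"
  have q_k: "\<bar>q - k\<bar> \<le> 9 ^ m * e"
    unfolding q_def k_def using approx S False small(2) by (rule cond_entropy_Xdot_approx)
  moreover have "0 \<le> q" "q \<le> 1" unfolding q_def by (simp_all add: cond_entropy_nonneg cond_entropy_bool_le_1)
  moreover have "9 ^ m * e < (1 :: real)" using small(2) by simp
  ultimately have "0 \<le> k \<and> k \<le> 1" by (intro int_bounds_of_approx[of q k "9 ^ m * e" 1]) simp_all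
  then consider "k = 0" | "k = 1" by linarith
  moreover have "mutual_info m Out W (Xdot S) Yout = 1 - q" unfolding q_def using S False by (rule mutual_info_Xdot)
  moreover have "parity_determined m r S \<longleftrightarrow> k = 0" unfolding parity_determined_def k_def using False by blast
  ultimately show ?thesis using q_k \<open>0 \<le> q\<close> \<open>q \<le> 1\<close> small(1) unfolding abs_le_iff by cases auto
qed

lemma mutual_info_Xdot_dichotomy:
  assumes near_int: "\<forall>S\<subseteq>users m. \<exists>k::int. \<bar>mutual_info m Out W (Xsub S) (YXcompl m S) - k\<bar> < \<epsilon>"
    and S: "S \<subseteq> users m" and small: "9 ^ m * (2 * \<epsilon>) < \<delta>" "9 ^ m * (2 * \<epsilon>) < 1/8"
  shows "let r = (\<lambda>T. if T \<subseteq> users m then round (mutual_info m Out W (Xsub T) (YXcompl m T)) else 0);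
             v = mutual_info m Out W (Xdot S) Yout
         in ((0 \<le> v \<and> v < \<delta>) \<or> (1 - \<delta> < v \<and> v \<le> 1)) \<and>
            (parity_determined m r S \<longrightarrow> 1 - \<delta> < v \<and> v \<le> 1) \<and>
            (\<not> parity_determined m r S \<longrightarrow> 0 \<le> v \<and> v < \<delta>)"
proof -
  obtain k :: int where "\<bar>mutual_info m Out W (Xsub {}) (YXcompl m {}) - k\<bar> < \<epsilon>"
    using near_int[rule_format, OF empty_subsetI] by blast
  then have "0 < \<epsilon>" by (meson abs_ge_zero le_less_trans)
  then have "2 * \<epsilon> \<le> 9 ^ m * (2 * \<epsilon>)" by (simp add: mult_right_mono)
  then have "\<epsilon> \<le> 1/2" using small(2) by linarith
  with near_int have "\<forall>A\<subseteq>users m. \<bar>cond_entropy (Xsub A) Yout - input_level m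
      (\<lambda>T. if T \<subseteq> users m then round (mutual_info m Out W (Xsub T) (YXcompl m T)) else 0) A\<bar> \<le> 2 * \<epsilon>"
    by (rule cond_entropy_Xsub_approx)
  from mutual_info_Xdot_by_parity_determined[OF this S small] show ?thesis
    unfolding Let_def by blast
qed

end

theorem mainTheorem6:
  fixes m :: nat
  assumes "m \<ge> 1"
  shows "\<forall>\<delta>::real. \<delta> > 0 \<longrightarrow>
    (\<exists>\<epsilon>::real. \<epsilon> > 0 \<and>
      (\<exists>\<Phi> :: (nat set \<Rightarrow> int) \<Rightarrow> nat set \<Rightarrow> bool.
        \<forall>(Out :: nat set) (W :: (nat \<Rightarrow> bool) \<Rightarrow> nat \<Rightarrow> real).
          binary_mac m Out W \<longrightarrow>
          (\<forall>S\<subseteq>users m. \<exists>k::int.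
              \<bar>mutual_info m Out W (Xsub S) (YXcompl m S) - real_of_int k\<bar> < \<epsilon>) \<longrightarrow>
          (\<forall>S\<subseteq>users m.
             (let r = (\<lambda>T. if T \<subseteq> users m
                           then round (mutual_info m Out W (Xsub T) (YXcompl m T)) else 0);
                  v = mutual_info m Out W (Xdot S) Yout
              in ((0 \<le> v \<and> v < \<delta>) \<or> (1 - \<delta> < v \<and> v \<le> 1)) \<and>
             (\<Phi> r S \<longrightarrow> 1 - \<delta> < v \<and> v \<le> 1) \<and>
             (\<not> \<Phi> r S \<longrightarrow> 0 \<le> v \<and> v < \<delta>)))))"
proof (intro allI impI, goal_cases)
  case (1 \<delta>)
  define \<epsilon> where "\<epsilon> = min \<delta> (1/8) / (4 * 9 ^ m)"
  have \<epsilon>: "0 < \<epsilon>" "9 ^ m * (2 * \<epsilon>) < \<delta>" "9 ^ m * (2 * \<epsilon>) < 1/8"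
    using 1 unfolding \<epsilon>_def by (simp_all add: min_def)
  show ?case
    by (intro exI[of _ \<epsilon>] conjI exI[of _ "parity_determined m"] allI impI \<epsilon>(1))
      (rule mac.mutual_info_Xdot_dichotomy[OF mac.intro]; (assumption | rule \<epsilon>))
qed

end
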